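(* For every $\varepsilon\in(0,1)$ there is an integer $c=\Theta\!\left(\frac{\log(1/\varepsilon)}{\varepsilon}\right)$ such that the following two-round algorithm outputs, for every edge-weighted graph $G(V,E)$ with nonnegative weights and every integer $k\ge c$, a matching $M$ with $(3+\varepsilon)\cdot\mathbb{E}[w(M)]\ge \mathrm{opt}(G)$: (1) form a random $k$-clustering $G^{(1)},\ldots,G^{(k)}$ of $G$ with expected multiplicity $c$; (2) for each $i\in[k]$ compute $M_i:=\mathsf{Greedy}(G^{(i)},\pi)$, where $\pi$ is a fixed ordering of $E$ in non-increasing order of weight (ties broken consistently); (3) on the graph $H$ with vertex set $V$ and edge set $\bigcup_i M_i$, compute $M_G:=\mathsf{Greedy}(H,\pi)$, and output the heavier of $M_G$ and $M_1$.
   Context: $\mathrm{opt}(G)$ is the weight of a maximum weight matching; $w(M)$ is the total weight of $M$. $\mathsf{Greedy}(G,\pi)$ scans the edges of $G$ in the order $\pi$ and adds an edge $(u,v)$ to the matching iff neither endpoint is already matched. A random $k$-clustering with expected multiplicity $c$: independently for each edge $e$, draw $c_e\sim\mathrm{Bin}(k,c/k)$ and place $e$ in $c_e$ distinct uniformly random sets among $E^{(1)},\ldots,E^{(k)}$; $G^{(i)}=G(V,E^{(i)})$. The expectation is over the random clustering. *)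

theory Defs
  imports "HOL-Probability.Probability" "HOL-Library.Landau_Symbols"
begin

definition simple_graph :: "'a set \<Rightarrow> 'a set set \<Rightarrow> bool" where
  "simple_graph V E \<longleftrightarrow> finite V \<and> (\<forall>e\<in>E. e \<subseteq> V \<and> card e = 2)"

definition is_matching :: "'a set set \<Rightarrow> 'a set set \<Rightarrow> bool" where
  "is_matching E M \<longleftrightarrow> M \<subseteq> E \<and> (\<forall>e\<in>M. \<forall>f\<in>M. e \<noteq> f \<longrightarrow> e \<inter> f = {})"

definition mweight :: "('a set \<Rightarrow> real) \<Rightarrow> 'a set set \<Rightarrow> real" where
  "mweight w M = (\<Sum>e\<in>M. w e)"

definition opt :: "'a set set \<Rightarrow> ('a set \<Rightarrow> real) \<Rightarrow> real" where
  "opt E w = Max {mweight w M | M. is_matching E M}"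

definition greedy :: "'a set list \<Rightarrow> 'a set set \<Rightarrow> 'a set set" where
  "greedy \<pi> F = foldl (\<lambda>M e. if e \<in> F \<and> e \<inter> \<Union>M = {} then insert e M else M) {} \<pi>"

definition weight_ordering :: "'a set set \<Rightarrow> ('a set \<Rightarrow> real) \<Rightarrow> 'a set list \<Rightarrow> bool" where
  "weight_ordering E w \<pi> \<longleftrightarrow> distinct \<pi> \<and> set \<pi> = E \<and> sorted_wrt (\<lambda>e f. w e \<ge> w f) \<pi>"

definition cluster_pmf :: "nat \<Rightarrow> nat \<Rightarrow> nat set pmf" where
  "cluster_pmf k c = do {
     n \<leftarrow> binomial_pmf k (real c / real k);
     pmf_of_set {S. S \<subseteq> {1..k} \<and> card S = n} }"

text \<open>Random k-clustering with expected multiplicity c: independently per edge.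
  A clustering A maps each edge e to the set of indices i with e in E^(i).\<close>
definition random_clustering :: "'a set set \<Rightarrow> nat \<Rightarrow> nat \<Rightarrow> ('a set \<Rightarrow> nat set) pmf" where
  "random_clustering E k c = Pi_pmf E {} (\<lambda>_. cluster_pmf k c)"

definition cluster_edges :: "'a set set \<Rightarrow> ('a set \<Rightarrow> nat set) \<Rightarrow> nat \<Rightarrow> 'a set set" where
  "cluster_edges E A i = {e\<in>E. i \<in> A e}"

definition alg_output :: "'a set set \<Rightarrow> ('a set \<Rightarrow> real) \<Rightarrow> 'a set list \<Rightarrow> nat
    \<Rightarrow> ('a set \<Rightarrow> nat set) \<Rightarrow> 'a set set" where
  "alg_output E w \<pi> k A =
     (let Ms = (\<lambda>i. greedy \<pi> (cluster_edges E A i));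
          H = (\<Union>i\<in>{1..k}. Ms i);
          MG = greedy \<pi> H
      in if mweight w MG \<ge> mweight w (Ms 1) then MG else Ms 1)"

end

theory Submission
  imports Defs "HOL-Real_Asymp.Real_Asymp"
begin

(* Fix a maximum weight matching Q. Call a cluster free for an edge e of Q if its greedy run has
  left both endpoints of e unmatched by the time e is scanned; this does not depend on which
  clusters e itself is placed in. If at least a delta fraction of the k clusters is free, e lands
  in one of them, hence in H, with probability at least 1 - (1 - c/k)^(delta k) >= 1 - delta, and
  then a heavier edge of M_G touches e. Otherwise, in more than (1 - delta) k clusters a heavier
  edge of M_i touches e. Distributing w(e) over the endpoints of these heavier edges, and using
  that every edge of M_i is itself touched by a heavier edge of M_G, gives
  (1 - delta) opt <= 2 E[w(M_G)] + (1/k) sum_i E[w(M_i)]. All M_i have the same distribution,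
  so the right-hand side is 2 E[w(M_G)] + E[w(M_1)] <= 3 E[w(output)]. Finally take
  delta = eps/4 and c = ceil(4 ln(4/eps) / eps). *)

section \<open>Greedy matching\<close>

definition greedy_step :: "'a set set \<Rightarrow> 'a set set \<Rightarrow> 'a set \<Rightarrow> 'a set set" where
  "greedy_step F M e = (if e \<in> F \<and> e \<inter> \<Union>M = {} then insert e M else M)"

lemma greedy_eq_foldl: "greedy \<pi> F = foldl (greedy_step F) {} \<pi>"
  unfolding greedy_def greedy_step_def by simp

lemma foldl_greedy_step_mono: "M \<subseteq> foldl (greedy_step F) M xs"
proof (induction xs arbitrary: M)
  case (Cons x xs)
  have "M \<subseteq> greedy_step F M x" by (auto simp: greedy_step_def)
  with Cons.IH[of "greedy_step F M x"] show ?case by simp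
qed simp

lemma foldl_greedy_step_subset: "foldl (greedy_step F) M xs \<subseteq> M \<union> (F \<inter> set xs)"
proof (induction xs arbitrary: M)
  case (Cons x xs)
  have "greedy_step F M x \<subseteq> M \<union> (F \<inter> {x})" by (auto simp: greedy_step_def)
  with Cons.IH[of "greedy_step F M x"] show ?case by auto
qed simp

lemma is_matching_foldl_greedy_step:
  "is_matching F M \<Longrightarrow> is_matching F (foldl (greedy_step F) M xs)"
proof (induction xs arbitrary: M)
  case (Cons x xs)
  have "is_matching F (greedy_step F M x)"
    using Cons.prems by (auto simp: greedy_step_def is_matching_def)
  with Cons.IH show ?case by simp
qed simp

lemma foldl_greedy_step_cong:
  "F \<inter> set xs = F' \<inter> set xs \<Longrightarrow> foldl (greedy_step F) M xs = foldl (greedy_step F') M xs"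
proof (induction xs arbitrary: M)
  case (Cons x xs)
  then have "greedy_step F M x = greedy_step F' M x" by (auto simp: greedy_step_def)
  with Cons show ?case by auto
qed simp

lemma greedy_subset: "greedy \<pi> F \<subseteq> F \<inter> set \<pi>"
  using foldl_greedy_step_subset[of F "{}" \<pi>] by (simp add: greedy_eq_foldl)

lemma is_matching_greedy: "is_matching F (greedy \<pi> F)"
  unfolding greedy_eq_foldl by (rule is_matching_foldl_greedy_step) (simp add: is_matching_def)

lemma greedy_cong: "F \<inter> set \<pi> = F' \<inter> set \<pi> \<Longrightarrow> greedy \<pi> F = greedy \<pi> F'"
  unfolding greedy_eq_foldl by (rule foldl_greedy_step_cong)

lemma greedy_append_mono: "greedy xs F \<subseteq> greedy (xs @ ys) F"
  by (simp add: greedy_eq_foldl foldl_greedy_step_mono)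

lemma greedy_accepts_free_edge:
  assumes "e \<in> F" "e \<inter> \<Union>(greedy xs F) = {}"
  shows "e \<in> greedy (xs @ e # ys) F"
  using assms foldl_greedy_step_mono[of "greedy_step F (greedy xs F) e" F ys]
  by (auto simp: greedy_eq_foldl greedy_step_def)

lemma greedy_blocking_edge:
  fixes w :: "'a set \<Rightarrow> 'b::preorder"
  assumes "sorted_wrt (\<lambda>e f. w e \<ge> w f) \<pi>" "e \<in> F" "e \<in> set \<pi>" "e \<noteq> {}"
  shows "\<exists>f\<in>greedy \<pi> F. f \<inter> e \<noteq> {} \<and> w e \<le> w f"
proof -
  obtain xs ys where \<pi>: "\<pi> = xs @ e # ys" using split_list[OF assms(3)] by blast
  show ?thesis
  proof (cases "e \<inter> \<Union>(greedy xs F) = {}")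
    case True
    then have "e \<in> greedy \<pi> F" unfolding \<pi> by (rule greedy_accepts_free_edge[OF assms(2)])
    with assms(4) show ?thesis by (intro bexI[of _ e]) auto
  next
    case False
    then obtain f where f: "f \<in> greedy xs F" "f \<inter> e \<noteq> {}" by blast
    have "f \<in> greedy \<pi> F" using f(1) greedy_append_mono unfolding \<pi> by blast
    moreover have "f \<in> set xs" using f(1) greedy_subset by blast
    then have "w e \<le> w f" using assms(1) unfolding \<pi> by (simp add: sorted_wrt_append)
    ultimately show ?thesis using f(2) by blast
  qed
qed

lemma takeWhile_neq_append_Cons: "x \<in> set xs \<Longrightarrow> \<exists>ys. xs = takeWhile (\<lambda>y. y \<noteq> x) xs @ x # ys"
  by (induction xs) auto

section \<open>Matchings and vertex potentials\<close>

lemma is_matching_disjoint: "is_matching E M \<Longrightarrow> disjoint M"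
  unfolding is_matching_def pairwise_def disjnt_def by blast

lemma is_matching_subset: "is_matching E Q \<Longrightarrow> P \<subseteq> Q \<Longrightarrow> is_matching E P"
  unfolding is_matching_def by (meson order_trans subsetD)

lemma is_matching_mono: "is_matching F M \<Longrightarrow> F \<subseteq> E \<Longrightarrow> is_matching E M"
  unfolding is_matching_def by (meson order_trans)

lemma finite_is_matching: "is_matching E M \<Longrightarrow> finite E \<Longrightarrow> finite M"
  unfolding is_matching_def by (meson finite_subset)

lemma finite_card_eq_2: "card e = 2 \<Longrightarrow> finite e"
  by (rule card_ge_0_finite) simp

lemma finite_Union_matching:
  assumes "is_matching E M" "finite E" "\<forall>e\<in>E. card e = 2"
  shows "finite (\<Union>M)"
  using assms finite_is_matching[OF assms(1,2)]
  by (intro finite_Union) (auto simp: is_matching_def intro: finite_card_eq_2)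

lemma sum_Union_matching:
  "is_matching E M \<Longrightarrow> \<forall>e\<in>E. card e = 2 \<Longrightarrow> (\<Sum>e\<in>M. \<Sum>v\<in>e. g v) = (\<Sum>v\<in>\<Union>M. g v)"
  by (subst sum.Union_disjoint_sets)
    (auto simp: is_matching_disjoint is_matching_def intro: finite_card_eq_2)

lemma simple_graph_finite_edges: "simple_graph V E \<Longrightarrow> finite E"
  unfolding simple_graph_def by (meson Pow_iff finite_Pow_iff finite_subset subsetI)

lemma opt_attained:
  assumes "finite E"
  obtains Q where "is_matching E Q" "opt E w = mweight w Q"
proof -
  have "{mweight w M | M. is_matching E M} \<subseteq> mweight w ` Pow E" by (auto simp: is_matching_def)
  then have "finite {mweight w M | M. is_matching E M}" by (rule finite_subset) (simp add: assms)
  moreover have "is_matching E {}" by (simp add: is_matching_def)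
  ultimately have "opt E w \<in> {mweight w M | M. is_matching E M}"
    unfolding opt_def by (intro Max_in) auto
  with that show ?thesis by blast
qed

lemma opt_nonneg: "finite E \<Longrightarrow> \<forall>e\<in>E. 0 \<le> w e \<Longrightarrow> 0 \<le> opt E w"
  by (rule opt_attained[of E w]) (auto simp: mweight_def is_matching_def intro!: sum_nonneg)

definition incident_weight :: "('a set \<Rightarrow> real) \<Rightarrow> 'a set set \<Rightarrow> 'a \<Rightarrow> real" where
  "incident_weight w M v = (\<Sum>f\<in>{f\<in>M. v \<in> f}. w f)"

lemma incident_weight_nonneg: "\<forall>f\<in>M. 0 \<le> w f \<Longrightarrow> 0 \<le> incident_weight w M v"
  unfolding incident_weight_def by (intro sum_nonneg) auto

lemma weight_le_sum_incident_weight: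
  assumes "finite M" "\<forall>f\<in>M. 0 \<le> w f" "f \<in> M" "f \<inter> e \<noteq> {}" "w e \<le> w f" "finite e"
  shows "w e \<le> (\<Sum>v\<in>e. incident_weight w M v)"
proof -
  obtain v where v: "v \<in> f" "v \<in> e" using assms(4) by blast
  have "w f \<le> incident_weight w M v"
    unfolding incident_weight_def using assms v by (intro member_le_sum) auto
  also have "\<dots> \<le> (\<Sum>v\<in>e. incident_weight w M v)"
    using assms v by (intro member_le_sum incident_weight_nonneg) auto
  finally show ?thesis using assms(5) by linarith
qed

lemma sum_incident_weight:
  assumes "finite M" "finite U"
  shows "(\<Sum>v\<in>U. incident_weight w M v) = (\<Sum>f\<in>M. w f * card (f \<inter> U))"
proof -
  have "(\<Sum>v\<in>U. incident_weight w M v) = (\<Sum>f\<in>M. \<Sum>v\<in>U. if v \<in> f then w f else 0)"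
    unfolding incident_weight_def using assms by (simp add: sum.inter_filter sum.swap[of _ U])
  also have "\<dots> = (\<Sum>f\<in>M. w f * card (f \<inter> U))"
    using assms(2) by (simp add: sum.If_cases Int_commute mult.commute)
  finally show ?thesis .
qed

lemma sum_incident_weight_le_double:
  assumes "finite M" "finite U" "\<forall>f\<in>M. 0 \<le> w f \<and> card f = 2"
  shows "(\<Sum>v\<in>U. incident_weight w M v) \<le> 2 * mweight w M"
proof -
  have "w f * card (f \<inter> U) \<le> 2 * w f" if "f \<in> M" for f
  proof -
    have "card (f \<inter> U) \<le> card f" using that assms(3) by (intro card_mono) (auto intro: finite_card_eq_2)
    then show ?thesis using that assms(3) by (simp add: mult_left_mono mult.commute)
  qed
  then show ?thesis
    using assms by (simp add: sum_incident_weight mweight_def sum_distrib_left sum_mono)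
qed

lemma sum_incident_weight_blocked:
  assumes N: "disjoint N" "finite N" "\<forall>f\<in>N. 0 \<le> w f \<and> card f = 2"
    and M: "finite M" "\<forall>g\<in>M. 0 \<le> w g"
    and blocked: "\<forall>f\<in>N. \<exists>g\<in>M. g \<inter> f \<noteq> {} \<and> w f \<le> w g"
    and S: "finite S"
  shows "(\<Sum>v\<in>S. incident_weight w N v) \<le> mweight w N + (\<Sum>v\<in>S. incident_weight w M v)"
proof -
  \<comment> \<open>An edge of N inside S is counted twice on the left: once it is paid by its own weight,
    once by the heavier edge of M touching it. An edge leaving S is counted at most once.\<close>
  define N\<^sub>S where "N\<^sub>S = {f\<in>N. f \<subseteq> S}"
  have fin: "finite f" if "f \<in> N" for f using that N(3) by (simp add: finite_card_eq_2)
  have edge: "w f * card (f \<inter> S) \<le> w f + (if f \<in> N\<^sub>S then \<Sum>v\<in>f. incident_weight w M v else 0)"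
    if f: "f \<in> N" for f
  proof (cases "f \<subseteq> S")
    case True
    obtain g where "g \<in> M" "g \<inter> f \<noteq> {}" "w f \<le> w g" using blocked f by blast
    then have "w f \<le> (\<Sum>v\<in>f. incident_weight w M v)"
      using M fin[OF f] by (intro weight_le_sum_incident_weight) auto
    with True f N(3) show ?thesis by (simp add: N\<^sub>S_def Int_absorb2)
  next
    case False
    then have "card (f \<inter> S) < card f" using fin[OF f] by (intro psubset_card_mono) auto
    then have "w f * card (f \<inter> S) \<le> w f * 1" using f N(3) by (intro mult_left_mono) auto
    with False show ?thesis by (simp add: N\<^sub>S_def)
  qed
  have "(\<Sum>v\<in>S. incident_weight w N v) = (\<Sum>f\<in>N. w f * card (f \<inter> S))"
    using N S by (rule_tac sum_incident_weight) auto
  also have "\<dots> \<le> mweight w N + (\<Sum>f\<in>N\<^sub>S. \<Sum>v\<in>f. incident_weight w M v)"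
  proof -
    have "(\<Sum>f\<in>N. w f * card (f \<inter> S))
        \<le> (\<Sum>f\<in>N. w f + (if f \<in> N\<^sub>S then \<Sum>v\<in>f. incident_weight w M v else 0))"
      by (rule sum_mono) (rule edge)
    also have "\<dots> = mweight w N + (\<Sum>f\<in>N\<^sub>S. \<Sum>v\<in>f. incident_weight w M v)"
      using N(2) by (simp add: mweight_def sum.distrib sum.If_cases N\<^sub>S_def Int_def)
    finally show ?thesis .
  qed
  also have "(\<Sum>f\<in>N\<^sub>S. \<Sum>v\<in>f. incident_weight w M v) = (\<Sum>v\<in>\<Union>N\<^sub>S. incident_weight w M v)"
    using N(1) fin by (subst sum.Union_disjoint_sets) (auto simp: N\<^sub>S_def pairwise_subset)
  also have "\<dots> \<le> (\<Sum>v\<in>S. incident_weight w M v)"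
    using M S by (intro sum_mono2 incident_weight_nonneg) (auto simp: N\<^sub>S_def)
  finally show ?thesis by simp
qed

lemma charging_bound_clusters:
  fixes t :: "'a set \<Rightarrow> real" and N :: "nat \<Rightarrow> 'a set set"
  assumes E: "finite E" "\<forall>e\<in>E. 0 \<le> w e \<and> card e = 2"
    and P: "is_matching E P" and M: "is_matching E M"
    and I: "finite I" "I \<noteq> {}" "\<forall>i\<in>I. is_matching E (N i)"
    and blocked: "\<forall>i\<in>I. \<forall>f\<in>N i. \<exists>g\<in>M. g \<inter> f \<noteq> {} \<and> w f \<le> w g"
    and t: "\<forall>e\<in>P. t e \<le> (\<Sum>i\<in>I. \<Sum>v\<in>e. incident_weight w (N i) v) / card I"
  shows "(\<Sum>e\<in>P. t e) \<le> (\<Sum>i\<in>I. mweight w (N i)) / card I + (\<Sum>v\<in>\<Union>P. incident_weight w M v)"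
proof -
  have card2: "\<forall>e\<in>E. card e = 2" using E(2) by simp
  have "(\<Sum>e\<in>P. t e) \<le> (\<Sum>e\<in>P. (\<Sum>i\<in>I. \<Sum>v\<in>e. incident_weight w (N i) v) / card I)"
    by (rule sum_mono) (erule t[rule_format])
  also have "\<dots> = (\<Sum>i\<in>I. \<Sum>e\<in>P. \<Sum>v\<in>e. incident_weight w (N i) v) / card I"
    by (simp only: sum_divide_distrib[symmetric] sum.swap[of _ P])
  also have "\<dots> = (\<Sum>i\<in>I. \<Sum>v\<in>\<Union>P. incident_weight w (N i) v) / card I"
    by (intro arg_cong[where f="\<lambda>x. x / card I"] sum.cong refl sum_Union_matching[OF P card2])
  also have "\<dots> \<le> (\<Sum>i\<in>I. mweight w (N i) + (\<Sum>v\<in>\<Union>P. incident_weight w M v)) / card I"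
  proof (intro divide_right_mono sum_mono)
    fix i assume i: "i \<in> I"
    have "N i \<subseteq> E" "M \<subseteq> E" using i I(3) M by (simp_all add: is_matching_def)
    then have "\<forall>f\<in>N i. 0 \<le> w f \<and> card f = 2" "\<forall>g\<in>M. 0 \<le> w g" "finite (N i)" "finite M"
      using E by (auto intro: finite_subset)
    then show "(\<Sum>v\<in>\<Union>P. incident_weight w (N i) v) \<le> mweight w (N i) + (\<Sum>v\<in>\<Union>P. incident_weight w M v)"
      using i blocked finite_Union_matching[OF P E(1) card2] is_matching_disjoint[OF I(3)[rule_format, OF i]]
      by (intro sum_incident_weight_blocked) simp_all
  qed simp
  also have "\<dots> = (\<Sum>i\<in>I. mweight w (N i)) / card I + (\<Sum>v\<in>\<Union>P. incident_weight w M v)"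
    using I by (simp add: sum.distrib add_divide_distrib)
  finally show ?thesis .
qed

lemma charging_bound:
  fixes t :: "'a set \<Rightarrow> real" and N :: "nat \<Rightarrow> 'a set set"
  assumes E: "finite E" "\<forall>e\<in>E. 0 \<le> w e \<and> card e = 2"
    and Q: "is_matching E Q" "Q\<^sub>1 \<subseteq> Q" and M: "is_matching E M"
    and I: "finite I" "I \<noteq> {}" "\<forall>i\<in>I. is_matching E (N i)"
    and blocked: "\<forall>i\<in>I. \<forall>f\<in>N i. \<exists>g\<in>M. g \<inter> f \<noteq> {} \<and> w f \<le> w g"
    and t\<^sub>1: "\<forall>e\<in>Q\<^sub>1. t e \<le> (\<Sum>v\<in>e. incident_weight w M v)"
    and t\<^sub>2: "\<forall>e\<in>Q - Q\<^sub>1. t e \<le> (\<Sum>i\<in>I. \<Sum>v\<in>e. incident_weight w (N i) v) / card I"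
  shows "(\<Sum>e\<in>Q. t e) \<le> 2 * mweight w M + (\<Sum>i\<in>I. mweight w (N i)) / card I"
proof -
  define \<alpha> where "\<alpha> = incident_weight w M"
  define Q\<^sub>2 where "Q\<^sub>2 = Q - Q\<^sub>1"
  have card2: "\<forall>e\<in>E. card e = 2" using E(2) by simp
  have Q\<^sub>1: "is_matching E Q\<^sub>1" and Q\<^sub>2: "is_matching E Q\<^sub>2"
    using Q by (auto simp: Q\<^sub>2_def intro: is_matching_subset)
  have "(\<Sum>e\<in>Q\<^sub>1. t e) \<le> (\<Sum>e\<in>Q\<^sub>1. \<Sum>v\<in>e. \<alpha> v)"
    unfolding \<alpha>_def by (rule sum_mono) (erule t\<^sub>1[rule_format])
  also have "\<dots> = (\<Sum>v\<in>\<Union>Q\<^sub>1. \<alpha> v)"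
    by (rule sum_Union_matching[OF Q\<^sub>1 card2])
  finally have part\<^sub>1: "(\<Sum>e\<in>Q\<^sub>1. t e) \<le> (\<Sum>v\<in>\<Union>Q\<^sub>1. \<alpha> v)" .
  have part\<^sub>2: "(\<Sum>e\<in>Q\<^sub>2. t e) \<le> (\<Sum>i\<in>I. mweight w (N i)) / card I + (\<Sum>v\<in>\<Union>Q\<^sub>2. \<alpha> v)"
    unfolding \<alpha>_def using t\<^sub>2 unfolding Q\<^sub>2_def[symmetric]
    by (rule charging_bound_clusters[OF E Q\<^sub>2 M I blocked])
  \<comment> \<open>Q is a matching, so each vertex potential of M is used at most once; they sum to 2 w(M).\<close>
  have "\<Union>Q\<^sub>1 \<inter> \<Union>Q\<^sub>2 = {}"
    using Int_Union_pairwise_disjoint[of Q\<^sub>1 Q\<^sub>2] is_matching_disjoint[OF Q(1)] Q(2)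
    by (simp add: Q\<^sub>2_def Un_absorb1)
  then have "(\<Sum>v\<in>\<Union>Q\<^sub>1. \<alpha> v) + (\<Sum>v\<in>\<Union>Q\<^sub>2. \<alpha> v) = (\<Sum>v\<in>\<Union>Q\<^sub>1 \<union> \<Union>Q\<^sub>2. \<alpha> v)"
    using finite_Union_matching[OF Q\<^sub>1 E(1) card2] finite_Union_matching[OF Q\<^sub>2 E(1) card2]
    by (intro sum.union_disjoint[symmetric])
  also have "\<dots> \<le> 2 * mweight w M"
  proof (unfold \<alpha>_def, rule sum_incident_weight_le_double)
    have "M \<subseteq> E" using M by (simp add: is_matching_def)
    then show "finite M" "\<forall>f\<in>M. 0 \<le> w f \<and> card f = 2" using E by (auto intro: finite_subset)
    show "finite (\<Union>Q\<^sub>1 \<union> \<Union>Q\<^sub>2)"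
      using finite_Union_matching[OF Q\<^sub>1 E(1) card2] finite_Union_matching[OF Q\<^sub>2 E(1) card2] by simp
  qed
  finally have part\<^sub>3: "(\<Sum>v\<in>\<Union>Q\<^sub>1. \<alpha> v) + (\<Sum>v\<in>\<Union>Q\<^sub>2. \<alpha> v) \<le> 2 * mweight w M" .
  have "(\<Sum>e\<in>Q. t e) = (\<Sum>e\<in>Q\<^sub>1. t e) + (\<Sum>e\<in>Q\<^sub>2. t e)"
    using finite_is_matching[OF Q(1) E(1)] Q(2) by (simp add: Q\<^sub>2_def sum.subset_diff)
  with part\<^sub>1 part\<^sub>2 part\<^sub>3 show ?thesis by linarith
qed

section \<open>Random clusterings\<close>

lemma finite_subsets_card: "finite X \<Longrightarrow> finite {S. S \<subseteq> X \<and> card S = n}"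
  by (rule finite_subset[of _ "Pow X"]) auto

lemma subsets_card_nonempty: "n \<le> card X \<Longrightarrow> {S. S \<subseteq> X \<and> card S = n} \<noteq> {}"
  by (metis (mono_tags, lifting) empty_Collect_eq obtain_subset_with_card_n)

lemma set_pmf_binomial_le: "0 \<le> p \<Longrightarrow> p \<le> 1 \<Longrightarrow> n \<in> set_pmf (binomial_pmf k p) \<Longrightarrow> n \<le> k"
  by (auto simp: set_pmf_binomial_eq split: if_splits)

lemma ratio_le_one: "c \<le> k \<Longrightarrow> real c / real k \<le> 1"
  by (cases "k = 0") (auto simp: divide_le_eq_1)

lemma set_pmf_of_set_subsets_card:
  "finite X \<Longrightarrow> n \<le> card X \<Longrightarrow> set_pmf (pmf_of_set {S. S \<subseteq> X \<and> card S = n}) = {S. S \<subseteq> X \<and> card S = n}"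
  by (intro set_pmf_of_set finite_subsets_card subsets_card_nonempty)

lemma set_pmf_cluster_pmf:
  assumes "c \<le> k"
  shows "set_pmf (cluster_pmf k c) \<subseteq> Pow {1..k}"
proof
  fix S assume "S \<in> set_pmf (cluster_pmf k c)"
  then obtain n where n: "n \<in> set_pmf (binomial_pmf k (real c / real k))"
    and S: "S \<in> set_pmf (pmf_of_set {S. S \<subseteq> {1..k} \<and> card S = n})"
    by (auto simp: cluster_pmf_def)
  have "n \<le> k" using set_pmf_binomial_le[OF _ ratio_le_one[OF assms] n] by simp
  with S show "S \<in> Pow {1..k}" by (simp add: set_pmf_of_set_subsets_card)
qed

lemma finite_set_pmf_cluster_pmf: "c \<le> k \<Longrightarrow> finite (set_pmf (cluster_pmf k c))"
  by (rule finite_subset[OF set_pmf_cluster_pmf]) simp_all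

lemma prob_pmf_of_set_subsets_avoiding:
  assumes "finite X" "T \<subseteq> X" "n \<le> card X"
  shows "measure_pmf.prob (pmf_of_set {S. S \<subseteq> X \<and> card S = n}) {S. S \<inter> T = {}}
           = real ((card X - card T) choose n) / real (card X choose n)"
proof -
  have "measure_pmf.prob (pmf_of_set {S. S \<subseteq> X \<and> card S = n}) {S. S \<inter> T = {}}
      = card ({S. S \<subseteq> X \<and> card S = n} \<inter> {S. S \<inter> T = {}}) / card {S. S \<subseteq> X \<and> card S = n}"
    using assms by (intro measure_pmf_of_set subsets_card_nonempty finite_subsets_card)
  also have "{S. S \<subseteq> X \<and> card S = n} \<inter> {S. S \<inter> T = {}} = {S. S \<subseteq> X - T \<and> card S = n}"
    by auto
  also have "card (X - T) = card X - card T"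
    using assms(1,2) by (simp add: card_Diff_subset finite_subset)
  then have "card {S. S \<subseteq> X - T \<and> card S = n} = (card X - card T) choose n"
    using assms(1) by (simp add: n_subsets)
  finally show ?thesis using assms(1) by (simp add: n_subsets)
qed

lemma sum_binomial_avoiding:
  fixes p :: real
  assumes "t \<le> k"
  shows "(\<Sum>n\<le>k. real ((k - t) choose n) * p ^ n * (1 - p) ^ (k - n)) = (1 - p) ^ t"
proof -
  have "(\<Sum>n\<le>k. real ((k - t) choose n) * p ^ n * (1 - p) ^ (k - n))
      = (\<Sum>n\<le>k - t. real ((k - t) choose n) * p ^ n * (1 - p) ^ (k - n))"
    by (rule sum.mono_neutral_right) auto
  also have "\<dots> = (\<Sum>n\<le>k - t. (1 - p) ^ t * (real ((k - t) choose n) * p ^ n * (1 - p) ^ (k - t - n)))"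
  proof (rule sum.cong[OF refl])
    fix n assume "n \<in> {..k - t}"
    then have "k - n = t + (k - t - n)" using assms by auto
    then show "real ((k - t) choose n) * p ^ n * (1 - p) ^ (k - n)
        = (1 - p) ^ t * (real ((k - t) choose n) * p ^ n * (1 - p) ^ (k - t - n))"
      by (simp add: power_add)
  qed
  also have "\<dots> = (1 - p) ^ t * (p + (1 - p)) ^ (k - t)"
    by (simp only: binomial_ring sum_distrib_left)
  finally show ?thesis by simp
qed

lemma prob_cluster_pmf_avoiding:
  assumes "c \<le> k" "T \<subseteq> {1..k}"
  shows "measure_pmf.prob (cluster_pmf k c) {S. S \<inter> T = {}} = (1 - real c / real k) ^ card T"
proof -
  define p where "p = real c / real k"
  have p: "0 \<le> p" "p \<le> 1" using ratio_le_one[OF assms(1)] by (auto simp: p_def)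
  have t: "card T \<le> k" using card_mono[OF _ assms(2)] by simp
  have "measure_pmf.prob (cluster_pmf k c) {S. S \<inter> T = {}}
      = measure_pmf.expectation (cluster_pmf k c) (indicator {S. S \<inter> T = {}})"
    by simp
  also have "\<dots> = (\<Sum>n\<le>k. pmf (binomial_pmf k p) n *
      measure_pmf.prob (pmf_of_set {S. S \<subseteq> {1..k} \<and> card S = n}) {S. S \<inter> T = {}})"
    unfolding cluster_pmf_def p_def[symmetric] using set_pmf_binomial_le[OF p]
    by (subst pmf_expectation_bind[of "{..k}"]) (auto simp: set_pmf_of_set_subsets_card)
  also have "\<dots> = (\<Sum>n\<le>k. real ((k - card T) choose n) * p ^ n * (1 - p) ^ (k - n))"
    using p assms(2) by (intro sum.cong refl)
      (simp add: prob_pmf_of_set_subsets_avoiding pmf_binomial)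
  also have "\<dots> = (1 - p) ^ card T" using t by (rule sum_binomial_avoiding)
  finally show ?thesis unfolding p_def .
qed

lemma image_permutes_subsets_card:
  assumes "\<sigma> permutes X"
  shows "image \<sigma> ` {S. S \<subseteq> X \<and> card S = n} = {S. S \<subseteq> X \<and> card S = n}"
proof -
  have image_mem: "\<tau> ` S \<in> {S. S \<subseteq> X \<and> card S = n}" if "\<tau> permutes X" "S \<subseteq> X" "card S = n" for \<tau> S
  proof -
    have "inj_on \<tau> S" using permutes_inj[OF that(1)] by (rule inj_on_subset) simp
    moreover have "\<tau> ` S \<subseteq> X" using permutes_image[OF that(1)] that(2) by blast
    ultimately show ?thesis using that(3) by (simp add: card_image)
  qed
  show ?thesis
  proof
    show "image \<sigma> ` {S. S \<subseteq> X \<and> card S = n} \<subseteq> {S. S \<subseteq> X \<and> card S = n}"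
      using image_mem[OF assms] by blast
    show "{S. S \<subseteq> X \<and> card S = n} \<subseteq> image \<sigma> ` {S. S \<subseteq> X \<and> card S = n}"
    proof
      fix S assume "S \<in> {S. S \<subseteq> X \<and> card S = n}"
      then have "inv \<sigma> ` S \<in> {S. S \<subseteq> X \<and> card S = n}"
        using image_mem[OF permutes_inv[OF assms]] by blast
      moreover have "S = \<sigma> ` (inv \<sigma> ` S)"
        using permutes_surj[OF assms] by (simp add: image_f_inv_f)
      ultimately show "S \<in> image \<sigma> ` {S. S \<subseteq> X \<and> card S = n}" by blast
    qed
  qed
qed

lemma cluster_pmf_relabel:
  assumes "\<sigma> permutes {1..k}" "c \<le> k"
  shows "map_pmf (image \<sigma>) (cluster_pmf k c) = cluster_pmf k c"
  unfolding cluster_pmf_def map_bind_pmf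
proof (rule bind_pmf_cong[OF refl])
  fix n assume "n \<in> set_pmf (binomial_pmf k (real c / real k))"
  then have "n \<le> k" by (rule set_pmf_binomial_le[rotated 2]) (simp_all add: ratio_le_one assms(2))
  moreover have "inj_on (image \<sigma>) {S. S \<subseteq> {1..k} \<and> card S = n}"
    using permutes_inj[OF assms(1)] by (simp add: inj_on_def inj_image_eq_iff)
  ultimately have "map_pmf (image \<sigma>) (pmf_of_set {S. S \<subseteq> {1..k} \<and> card S = n})
      = pmf_of_set (image \<sigma> ` {S. S \<subseteq> {1..k} \<and> card S = n})"
    by (intro map_pmf_of_set_inj finite_subsets_card subsets_card_nonempty) simp_all
  then show "map_pmf (image \<sigma>) (pmf_of_set {S. S \<subseteq> {1..k} \<and> card S = n})
      = pmf_of_set {S. S \<subseteq> {1..k} \<and> card S = n}"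
    by (simp only: image_permutes_subsets_card[OF assms(1)])
qed

lemma random_clustering_relabel:
  assumes "finite E" "\<sigma> permutes {1..k}" "c \<le> k"
  shows "map_pmf (\<lambda>A. image \<sigma> \<circ> A) (random_clustering E k c) = random_clustering E k c"
  using Pi_pmf_map[OF assms(1), of "image \<sigma>" "{}" "{}" "\<lambda>_. cluster_pmf k c"]
  by (simp add: random_clustering_def cluster_pmf_relabel[OF assms(2,3)])

lemma expectation_cluster_edges_eq:
  fixes g :: "'a set set \<Rightarrow> real"
  assumes "finite E" "c \<le> k" "i \<in> {1..k}" "j \<in> {1..k}"
  shows "measure_pmf.expectation (random_clustering E k c) (\<lambda>A. g (cluster_edges E A i))
       = measure_pmf.expectation (random_clustering E k c) (\<lambda>A. g (cluster_edges E A j))"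
proof -
  define \<sigma> where "\<sigma> = Transposition.transpose i j"
  have "cluster_edges E (image \<sigma> \<circ> A) j = cluster_edges E A i" for A
    by (auto simp: cluster_edges_def \<sigma>_def Transposition.transpose_def image_iff)
  then have "measure_pmf.expectation (random_clustering E k c) (\<lambda>A. g (cluster_edges E A i))
      = measure_pmf.expectation (map_pmf (\<lambda>A. image \<sigma> \<circ> A) (random_clustering E k c))
          (\<lambda>A. g (cluster_edges E A j))"
    by simp
  also have "map_pmf (\<lambda>A. image \<sigma> \<circ> A) (random_clustering E k c) = random_clustering E k c"
    using assms by (intro random_clustering_relabel) (simp_all add: \<sigma>_def permutes_swap_id)
  finally show ?thesis .
qed

lemma expectation_bind_pmf_ge:
  fixes h :: "'b \<Rightarrow> real"
  assumes "finite (set_pmf p)" "\<And>x. x \<in> set_pmf p \<Longrightarrow> finite (set_pmf (q x))"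
    and "\<And>x. x \<in> set_pmf p \<Longrightarrow> b \<le> measure_pmf.expectation (q x) h"
  shows "b \<le> measure_pmf.expectation (p \<bind> q) h"
proof -
  have "b = (\<Sum>x\<in>set_pmf p. pmf p x * b)"
    using sum_pmf_eq_1[OF assms(1) order_refl] by (simp add: sum_distrib_right[symmetric])
  also have "\<dots> \<le> (\<Sum>x\<in>set_pmf p. pmf p x * measure_pmf.expectation (q x) h)"
    using assms(3) by (intro sum_mono mult_left_mono) auto
  also have "\<dots> = measure_pmf.expectation (p \<bind> q) h"
    using assms(1,2) by (subst pmf_expectation_bind[of "set_pmf p"]) auto
  finally show ?thesis .
qed

lemma finite_set_pmf_Pi_pmf:
  "finite A \<Longrightarrow> (\<And>x. x \<in> A \<Longrightarrow> finite (set_pmf (p x))) \<Longrightarrow> finite (set_pmf (Pi_pmf A dflt p))"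
  by (rule finite_subset[OF set_Pi_pmf_subset']) (auto intro: finite_PiE_dflt)

lemma expectation_Pi_pmf_resample_ge:
  fixes g :: "('e \<Rightarrow> 'b) \<Rightarrow> real"
  assumes "finite E" "e \<in> E" "finite (set_pmf C)"
    and "\<And>B. b \<le> measure_pmf.expectation C (\<lambda>y. g (B(e := y)))"
  shows "b \<le> measure_pmf.expectation (Pi_pmf E dflt (\<lambda>_. C)) g"
proof -
  define P where "P = Pi_pmf (E - {e}) dflt (\<lambda>_. C)"
  have "Pi_pmf E dflt (\<lambda>_. C) = C \<bind> (\<lambda>y. P \<bind> (\<lambda>B. return_pmf (B(e := y))))"
    using Pi_pmf_insert'[of "E - {e}" e dflt "\<lambda>_. C"] assms(1,2) by (simp add: P_def insert_absorb)
  also have "\<dots> = P \<bind> (\<lambda>B. map_pmf (\<lambda>y. B(e := y)) C)"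
    by (subst bind_commute_pmf) (simp add: map_pmf_def)
  finally have eq: "Pi_pmf E dflt (\<lambda>_. C) = P \<bind> (\<lambda>B. map_pmf (\<lambda>y. B(e := y)) C)" .
  show ?thesis
    unfolding eq using assms
    by (intro expectation_bind_pmf_ge) (simp_all add: P_def finite_set_pmf_Pi_pmf)
qed

section \<open>The charging argument\<close>

definition cluster_matching :: "'a set set \<Rightarrow> 'a set list \<Rightarrow> ('a set \<Rightarrow> nat set) \<Rightarrow> nat \<Rightarrow> 'a set set" where
  "cluster_matching E \<pi> A i = greedy \<pi> (cluster_edges E A i)"

definition merged_edges :: "'a set set \<Rightarrow> 'a set list \<Rightarrow> nat \<Rightarrow> ('a set \<Rightarrow> nat set) \<Rightarrow> 'a set set" where
  "merged_edges E \<pi> k A = (\<Union>i\<in>{1..k}. cluster_matching E \<pi> A i)"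

definition merged_matching :: "'a set set \<Rightarrow> 'a set list \<Rightarrow> nat \<Rightarrow> ('a set \<Rightarrow> nat set) \<Rightarrow> 'a set set" where
  "merged_matching E \<pi> k A = greedy \<pi> (merged_edges E \<pi> k A)"

lemma mweight_alg_output:
  "mweight w (alg_output E w \<pi> k A)
     = max (mweight w (merged_matching E \<pi> k A)) (mweight w (cluster_matching E \<pi> A 1))"
  unfolding alg_output_def Let_def merged_matching_def merged_edges_def cluster_matching_def
  by (simp add: max_def)

lemma cluster_edges_subset: "cluster_edges E A i \<subseteq> E"
  unfolding cluster_edges_def by blast

lemma is_matching_cluster_matching: "is_matching E (cluster_matching E \<pi> A i)"
  unfolding cluster_matching_def by (rule is_matching_mono[OF is_matching_greedy cluster_edges_subset])

lemma cluster_matching_subset: "cluster_matching E \<pi> A i \<subseteq> E"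
  using is_matching_cluster_matching unfolding is_matching_def by (rule conjunct1)

lemma merged_edges_subset: "merged_edges E \<pi> k A \<subseteq> E"
  using is_matching_cluster_matching unfolding merged_edges_def is_matching_def by (meson UN_least)

lemma is_matching_merged_matching: "is_matching E (merged_matching E \<pi> k A)"
  unfolding merged_matching_def by (rule is_matching_mono[OF is_matching_greedy merged_edges_subset])

lemma merged_matching_subset: "merged_matching E \<pi> k A \<subseteq> E"
  using is_matching_merged_matching unfolding is_matching_def by (rule conjunct1)

lemma merged_matching_blocks:
  assumes "weight_ordering E w \<pi>" "\<forall>e\<in>E. card e = 2" "f \<in> merged_edges E \<pi> k A"
  shows "\<exists>g\<in>merged_matching E \<pi> k A. g \<inter> f \<noteq> {} \<and> w f \<le> w g"
  unfolding merged_matching_def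
proof (rule greedy_blocking_edge)
  have "f \<in> E" using assms(3) merged_edges_subset by blast
  then show "f \<in> set \<pi>" "f \<noteq> {}" using assms(1,2) by (auto simp: weight_ordering_def)
qed (use assms in \<open>simp_all add: weight_ordering_def\<close>)

definition free_clusters :: "'a set set \<Rightarrow> 'a set list \<Rightarrow> nat \<Rightarrow> ('a set \<Rightarrow> nat set) \<Rightarrow> 'a set \<Rightarrow> nat set" where
  "free_clusters E \<pi> k A e =
     {i\<in>{1..k}. e \<inter> \<Union>(greedy (takeWhile (\<lambda>f. f \<noteq> e) \<pi>) (cluster_edges E A i)) = {}}"

text \<open>The part of w e that the accounting argument pays with the matchings of one outcome: if many
  clusters are free for e, all of w e when e survives into H; otherwise the fraction of clusters
  in which e is blocked.\<close>

definition charge :: "'a set set \<Rightarrow> ('a set \<Rightarrow> real) \<Rightarrow> 'a set list \<Rightarrow> nat \<Rightarrow> real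
    \<Rightarrow> ('a set \<Rightarrow> nat set) \<Rightarrow> 'a set \<Rightarrow> real" where
  "charge E w \<pi> k \<delta> A e =
     (if \<delta> * k \<le> card (free_clusters E \<pi> k A e)
      then (if e \<in> merged_edges E \<pi> k A then w e else 0)
      else w e * card ({1..k} - free_clusters E \<pi> k A e) / k)"

lemma free_clusters_fun_upd: "free_clusters E \<pi> k (A(e := S)) e = free_clusters E \<pi> k A e"
proof -
  have "e \<notin> set (takeWhile (\<lambda>f. f \<noteq> e) \<pi>)" by (auto dest: set_takeWhileD)
  then have "greedy (takeWhile (\<lambda>f. f \<noteq> e) \<pi>) (cluster_edges E (A(e := S)) i)
      = greedy (takeWhile (\<lambda>f. f \<noteq> e) \<pi>) (cluster_edges E A i)" for i
    by (intro greedy_cong) (auto simp: cluster_edges_def)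
  then show ?thesis by (simp add: free_clusters_def)
qed

lemma mem_merged_edges_if_free:
  assumes "e \<in> E" "e \<in> set \<pi>" "i \<in> free_clusters E \<pi> k A e" "i \<in> A e"
  shows "e \<in> merged_edges E \<pi> k A"
proof -
  define xs where "xs = takeWhile (\<lambda>f. f \<noteq> e) \<pi>"
  obtain ys where \<pi>: "\<pi> = xs @ e # ys" using takeWhile_neq_append_Cons[OF assms(2)] by (auto simp: xs_def)
  have "e \<in> greedy (xs @ e # ys) (cluster_edges E A i)"
    using assms(1,3,4) by (intro greedy_accepts_free_edge) (auto simp: cluster_edges_def free_clusters_def xs_def)
  then have "e \<in> cluster_matching E \<pi> A i" by (simp add: cluster_matching_def \<pi>)
  with assms(3) show ?thesis by (auto simp: merged_edges_def free_clusters_def)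
qed

lemma charge_le_merged:
  fixes \<delta> :: real
  assumes "weight_ordering E w \<pi>" "\<forall>e\<in>E. 0 \<le> w e \<and> card e = 2" "finite E" "e \<in> E"
    and "\<delta> * k \<le> real (card (free_clusters E \<pi> k A e))"
  shows "charge E w \<pi> k \<delta> A e \<le> (\<Sum>v\<in>e. incident_weight w (merged_matching E \<pi> k A) v)"
proof -
  let ?M = "merged_matching E \<pi> k A"
  have ME: "?M \<subseteq> E" by (rule merged_matching_subset)
  have M: "finite ?M" "\<forall>g\<in>?M. 0 \<le> w g"
    using finite_subset[OF ME assms(3)] ME assms(2) by auto
  show ?thesis
  proof (cases "e \<in> merged_edges E \<pi> k A")
    case True
    have "\<forall>e\<in>E. card e = 2" using assms(2) by simp
    then have "\<exists>g\<in>?M. g \<inter> e \<noteq> {} \<and> w e \<le> w g" by (rule merged_matching_blocks[OF assms(1) _ True])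
    then obtain g where g: "g \<in> ?M" "g \<inter> e \<noteq> {}" "w e \<le> w g" by blast
    have "finite e" using assms(2,4) by (simp add: finite_card_eq_2)
    with M g have "w e \<le> (\<Sum>v\<in>e. incident_weight w ?M v)" by (rule weight_le_sum_incident_weight)
    with True assms(5) show ?thesis by (simp add: charge_def)
  next
    case False
    have "0 \<le> (\<Sum>v\<in>e. incident_weight w ?M v)" using M(2) by (intro sum_nonneg incident_weight_nonneg)
    with False assms(5) show ?thesis by (simp add: charge_def)
  qed
qed

lemma charge_le_clusters:
  fixes \<delta> :: real
  assumes "weight_ordering E w \<pi>" "\<forall>e\<in>E. 0 \<le> w e \<and> card e = 2" "finite E" "e \<in> E"
    and "\<not> \<delta> * k \<le> real (card (free_clusters E \<pi> k A e))"
  shows "charge E w \<pi> k \<delta> A e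
           \<le> (\<Sum>i\<in>{1..k}. \<Sum>v\<in>e. incident_weight w (cluster_matching E \<pi> A i) v) / k"
proof -
  define T where "T = free_clusters E \<pi> k A e"
  define xs where "xs = takeWhile (\<lambda>f. f \<noteq> e) \<pi>"
  obtain ys where \<pi>: "\<pi> = xs @ e # ys"
    using takeWhile_neq_append_Cons[of e \<pi>] assms(1,4) by (auto simp: xs_def weight_ordering_def)
  have M: "finite (cluster_matching E \<pi> A i)" "\<forall>g\<in>cluster_matching E \<pi> A i. 0 \<le> w g" for i
    using finite_subset[OF cluster_matching_subset assms(3)] cluster_matching_subset[of E \<pi> A i] assms(2)
    by auto
  have fin_e: "finite e" using assms(2,4) by (simp add: finite_card_eq_2)
  have blocked: "w e \<le> (\<Sum>v\<in>e. incident_weight w (cluster_matching E \<pi> A i) v)"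
    if "i \<in> {1..k} - T" for i
  proof -
    have "e \<inter> \<Union>(greedy xs (cluster_edges E A i)) \<noteq> {}"
      using that by (simp add: T_def free_clusters_def xs_def)
    then obtain f where f: "f \<in> greedy xs (cluster_edges E A i)" "f \<inter> e \<noteq> {}" by blast
    have "f \<in> set xs" using f(1) greedy_subset by blast
    then have "w e \<le> w f" using assms(1) by (auto simp: weight_ordering_def \<pi> sorted_wrt_append)
    moreover have "f \<in> cluster_matching E \<pi> A i"
      using f(1) greedy_append_mono by (auto simp: cluster_matching_def \<pi>)
    ultimately show ?thesis using f(2) M fin_e by (intro weight_le_sum_incident_weight) auto
  qed
  have "charge E w \<pi> k \<delta> A e = (\<Sum>i\<in>{1..k} - T. w e) / k"
    using assms(5) by (simp add: charge_def T_def)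
  also have "\<dots> \<le> (\<Sum>i\<in>{1..k} - T. \<Sum>v\<in>e. incident_weight w (cluster_matching E \<pi> A i) v) / k"
    by (intro divide_right_mono sum_mono blocked) simp_all
  also have "\<dots> \<le> (\<Sum>i\<in>{1..k}. \<Sum>v\<in>e. incident_weight w (cluster_matching E \<pi> A i) v) / k"
    using M by (intro divide_right_mono sum_mono2 sum_nonneg incident_weight_nonneg) auto
  finally show ?thesis .
qed

lemma sum_charge_le:
  assumes "weight_ordering E w \<pi>" "\<forall>e\<in>E. 0 \<le> w e \<and> card e = 2" "finite E" "0 < k"
    and "is_matching E Q"
  shows "(\<Sum>e\<in>Q. charge E w \<pi> k \<delta> A e)
           \<le> 2 * mweight w (merged_matching E \<pi> k A) + (\<Sum>i\<in>{1..k}. mweight w (cluster_matching E \<pi> A i)) / k"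
proof -
  define Q\<^sub>1 where "Q\<^sub>1 = {e\<in>Q. \<delta> * k \<le> real (card (free_clusters E \<pi> k A e))}"
  have QE: "Q \<subseteq> E" using assms(5) by (simp add: is_matching_def)
  have "(\<Sum>e\<in>Q. charge E w \<pi> k \<delta> A e) \<le> 2 * mweight w (merged_matching E \<pi> k A)
      + (\<Sum>i\<in>{1..k}. mweight w (cluster_matching E \<pi> A i)) / card {1..k}"
  proof (rule charging_bound[OF assms(3,2,5), of Q\<^sub>1])
    show "\<forall>i\<in>{1..k}. \<forall>f\<in>cluster_matching E \<pi> A i.
        \<exists>g\<in>merged_matching E \<pi> k A. g \<inter> f \<noteq> {} \<and> w f \<le> w g"
    proof (intro ballI)
      fix i f assume "i \<in> {1..k}" "f \<in> cluster_matching E \<pi> A i"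
      then have "f \<in> merged_edges E \<pi> k A" by (auto simp: merged_edges_def)
      moreover have "\<forall>e\<in>E. card e = 2" using assms(2) by blast
      ultimately show "\<exists>g\<in>merged_matching E \<pi> k A. g \<inter> f \<noteq> {} \<and> w f \<le> w g"
        using merged_matching_blocks[OF assms(1)] by blast
    qed
    show "\<forall>e\<in>Q\<^sub>1. charge E w \<pi> k \<delta> A e \<le> (\<Sum>v\<in>e. incident_weight w (merged_matching E \<pi> k A) v)"
      using charge_le_merged[OF assms(1-3)] QE unfolding Q\<^sub>1_def by blast
    show "\<forall>e\<in>Q - Q\<^sub>1. charge E w \<pi> k \<delta> A e
        \<le> (\<Sum>i\<in>{1..k}. \<Sum>v\<in>e. incident_weight w (cluster_matching E \<pi> A i) v) / card {1..k}"
    proof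
      fix e assume "e \<in> Q - Q\<^sub>1"
      then have "e \<in> E" "\<not> \<delta> * k \<le> real (card (free_clusters E \<pi> k A e))"
        using QE by (auto simp: Q\<^sub>1_def)
      then show "charge E w \<pi> k \<delta> A e
          \<le> (\<Sum>i\<in>{1..k}. \<Sum>v\<in>e. incident_weight w (cluster_matching E \<pi> A i) v) / card {1..k}"
        using charge_le_clusters[OF assms(1-3)] by simp
    qed
    show "Q\<^sub>1 \<subseteq> Q" by (auto simp: Q\<^sub>1_def)
    show "finite {1..k}" "{1..k} \<noteq> {}" using assms(4) by auto
    show "is_matching E (merged_matching E \<pi> k A)" by (rule is_matching_merged_matching)
    show "\<forall>i\<in>{1..k}. is_matching E (cluster_matching E \<pi> A i)" by (simp add: is_matching_cluster_matching)
  qed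
  then show ?thesis by simp
qed

lemma one_minus_ratio_pow_le:
  assumes "c \<le> k" "0 < k" "0 < \<delta>" "ln (1 / \<delta>) \<le> c * \<delta>" "\<delta> * k \<le> t"
  shows "(1 - real c / real k) ^ t \<le> \<delta>"
proof -
  define p where "p = real c / real k"
  have p: "0 \<le> p" "p \<le> 1" using ratio_le_one[OF assms(1)] by (auto simp: p_def)
  have "(1 - p) ^ t \<le> exp (- p) ^ t"
    using p exp_ge_add_one_self[of "- p"] by (intro power_mono) auto
  also have "\<dots> = exp (- (p * t))" by (simp add: exp_of_nat_mult[symmetric] mult.commute)
  also have "\<dots> \<le> exp (- ln (1 / \<delta>))"
  proof -
    have "p * (\<delta> * k) \<le> p * t" using assms(5) p(1) by (rule mult_left_mono)
    moreover have "p * (\<delta> * k) = c * \<delta>" using assms(2) by (simp add: p_def)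
    ultimately show ?thesis using assms(4) by simp
  qed
  also have "\<dots> = \<delta>" using assms(3) by (simp add: exp_minus ln_div)
  finally show ?thesis unfolding p_def .
qed

lemma prob_cluster_pmf_meets_ge:
  fixes \<delta> :: real
  assumes "c \<le> k" "0 < k" "0 < \<delta>" "ln (1 / \<delta>) \<le> c * \<delta>" "T \<subseteq> {1..k}" "\<delta> * k \<le> card T"
  shows "1 - \<delta> \<le> measure_pmf.prob (cluster_pmf k c) {S. S \<inter> T \<noteq> {}}"
proof -
  have "measure_pmf.prob (cluster_pmf k c) {S. S \<inter> T \<noteq> {}} = 1 - (1 - real c / real k) ^ card T"
    using measure_pmf.prob_compl[of "{S. S \<inter> T = {}}" "cluster_pmf k c"] prob_cluster_pmf_avoiding[OF assms(1,5)]
    by (simp add: Compl_eq_Diff_UNIV[symmetric] Collect_neg_eq)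
  with one_minus_ratio_pow_le[OF assms(1-4,6)] show ?thesis by simp
qed

lemma expectation_charge_resample_ge:
  assumes "weight_ordering E w \<pi>" "e \<in> E" "0 \<le> w e"
    and "c \<le> k" "0 < k" "0 < \<delta>" "ln (1 / \<delta>) \<le> c * \<delta>"
  shows "(1 - \<delta>) * w e \<le> measure_pmf.expectation (cluster_pmf k c) (\<lambda>S. charge E w \<pi> k \<delta> (B(e := S)) e)"
proof -
  define T where "T = free_clusters E \<pi> k B e"
  have T: "T \<subseteq> {1..k}" by (auto simp: T_def free_clusters_def)
  have e: "e \<in> set \<pi>" using assms(1,2) by (simp add: weight_ordering_def)
  have charge: "charge E w \<pi> k \<delta> (B(e := S)) e
      = (if \<delta> * k \<le> card T then (if e \<in> merged_edges E \<pi> k (B(e := S)) then w e else 0)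
         else w e * card ({1..k} - T) / k)" for S
    by (simp add: charge_def free_clusters_fun_upd T_def)
  show ?thesis
  proof (cases "\<delta> * k \<le> card T")
    case True
    have "w e * indicator {S. S \<inter> T \<noteq> {}} S \<le> charge E w \<pi> k \<delta> (B(e := S)) e" for S
    proof (cases "S \<inter> T = {}")
      case False
      then obtain i where "i \<in> T" "i \<in> S" by blast
      then have "e \<in> merged_edges E \<pi> k (B(e := S))"
        using mem_merged_edges_if_free[OF assms(2) e] by (simp add: T_def free_clusters_fun_upd)
      with True False show ?thesis by (simp add: charge)
    qed (use True assms(3) in \<open>simp add: charge\<close>)
    then have "measure_pmf.expectation (cluster_pmf k c) (\<lambda>S. w e * indicator {S. S \<inter> T \<noteq> {}} S)
        \<le> measure_pmf.expectation (cluster_pmf k c) (\<lambda>S. charge E w \<pi> k \<delta> (B(e := S)) e)"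
      using finite_set_pmf_cluster_pmf[OF assms(4)] by (intro integral_mono integrable_measure_pmf_finite)
    moreover have "(1 - \<delta>) * w e \<le> w e * measure_pmf.prob (cluster_pmf k c) {S. S \<inter> T \<noteq> {}}"
      using prob_cluster_pmf_meets_ge[OF assms(4-7) T True] assms(3) by (simp add: mult_left_mono mult.commute)
    ultimately show ?thesis by simp
  next
    case False
    have "card ({1..k} - T) = k - card T" using T by (simp add: card_Diff_subset finite_subset)
    moreover have "card T \<le> k" using card_mono[OF _ T] by simp
    ultimately have "1 - \<delta> \<le> card ({1..k} - T) / k" using False assms(5) by (simp add: field_simps)
    then have "w e * (1 - \<delta>) \<le> w e * (card ({1..k} - T) / k)"
      using assms(3) by (rule mult_left_mono)
    with False show ?thesis by (simp add: charge mult.commute)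
  qed
qed

lemma expectation_charge_ge:
  assumes "finite E" "weight_ordering E w \<pi>" "e \<in> E" "0 \<le> w e"
    and "c \<le> k" "0 < k" "0 < \<delta>" "ln (1 / \<delta>) \<le> c * \<delta>"
  shows "(1 - \<delta>) * w e \<le> measure_pmf.expectation (random_clustering E k c) (\<lambda>A. charge E w \<pi> k \<delta> A e)"
  unfolding random_clustering_def
  using assms(1,3) finite_set_pmf_cluster_pmf[OF assms(5)] expectation_charge_resample_ge[OF assms(2-8)]
  by (rule expectation_Pi_pmf_resample_ge)

lemma finite_set_pmf_random_clustering: "finite E \<Longrightarrow> c \<le> k \<Longrightarrow> finite (set_pmf (random_clustering E k c))"
  unfolding random_clustering_def by (intro finite_set_pmf_Pi_pmf finite_set_pmf_cluster_pmf)

lemma expectation_average_cluster_matching: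
  assumes "finite E" "c \<le> k" "0 < k"
  shows "measure_pmf.expectation (random_clustering E k c)
           (\<lambda>A. (\<Sum>i\<in>{1..k}. mweight w (cluster_matching E \<pi> A i)) / k)
       = measure_pmf.expectation (random_clustering E k c) (\<lambda>A. mweight w (cluster_matching E \<pi> A 1))"
proof -
  let ?R = "random_clustering E k c"
  have int: "integrable ?R f" for f :: "_ \<Rightarrow> real"
    using finite_set_pmf_random_clustering[OF assms(1,2)] by (rule integrable_measure_pmf_finite)
  have "measure_pmf.expectation ?R (\<lambda>A. (\<Sum>i\<in>{1..k}. mweight w (cluster_matching E \<pi> A i)) / k)
      = (\<Sum>i\<in>{1..k}. measure_pmf.expectation ?R (\<lambda>A. mweight w (cluster_matching E \<pi> A i))) / k"
    by (simp add: int)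
  also have "\<dots> = (\<Sum>i\<in>{1..k}. measure_pmf.expectation ?R (\<lambda>A. mweight w (cluster_matching E \<pi> A 1))) / k"
    unfolding cluster_matching_def using assms
    by (intro arg_cong[where f="\<lambda>x. x / k"] sum.cong refl expectation_cluster_edges_eq) auto
  finally show ?thesis using assms(3) by simp
qed

lemma opt_le_three_expectation:
  assumes "finite E" "\<forall>e\<in>E. 0 \<le> w e \<and> card e = 2" "weight_ordering E w \<pi>"
    and "c \<le> k" "0 < k" "0 < \<delta>" "ln (1 / \<delta>) \<le> c * \<delta>"
  shows "(1 - \<delta>) * opt E w \<le> 3 * measure_pmf.expectation (random_clustering E k c)
           (\<lambda>A. mweight w (alg_output E w \<pi> k A))"
proof -
  let ?R = "random_clustering E k c"
  let ?M\<^sub>G = "\<lambda>A. mweight w (merged_matching E \<pi> k A)"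
  let ?M\<^sub>1 = "\<lambda>A. mweight w (cluster_matching E \<pi> A 1)"
  let ?avg = "\<lambda>A. (\<Sum>i\<in>{1..k}. mweight w (cluster_matching E \<pi> A i)) / k"
  have int: "integrable ?R f" for f :: "_ \<Rightarrow> real"
    using finite_set_pmf_random_clustering[OF assms(1,4)] by (rule integrable_measure_pmf_finite)
  obtain Q where Q: "is_matching E Q" "opt E w = mweight w Q" using opt_attained[OF assms(1)] .
  have QE: "Q \<subseteq> E" using Q(1) by (simp add: is_matching_def)
  have "(1 - \<delta>) * opt E w = (\<Sum>e\<in>Q. (1 - \<delta>) * w e)"
    by (simp add: Q(2) mweight_def sum_distrib_left)
  also have "\<dots> \<le> (\<Sum>e\<in>Q. measure_pmf.expectation ?R (\<lambda>A. charge E w \<pi> k \<delta> A e))"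
    using QE assms by (intro sum_mono expectation_charge_ge) auto
  also have "\<dots> = measure_pmf.expectation ?R (\<lambda>A. \<Sum>e\<in>Q. charge E w \<pi> k \<delta> A e)"
    by (simp add: int)
  also have "\<dots> \<le> measure_pmf.expectation ?R (\<lambda>A. 2 * ?M\<^sub>G A + ?avg A)"
    using assms Q(1) by (intro integral_mono int sum_charge_le) auto
  also have "\<dots> = measure_pmf.expectation ?R (\<lambda>A. 2 * ?M\<^sub>G A + ?M\<^sub>1 A)"
    using expectation_average_cluster_matching[OF assms(1,4,5)] by (simp add: int)
  also have "\<dots> \<le> measure_pmf.expectation ?R (\<lambda>A. 3 * mweight w (alg_output E w \<pi> k A))"
    by (intro integral_mono int) (simp add: mweight_alg_output)
  finally show ?thesis by simp
qed

section \<open>The multiplicity\<close>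

definition cluster_multiplicity :: "real \<Rightarrow> nat" where
  "cluster_multiplicity \<epsilon> = nat \<lceil>4 * ln (4 / \<epsilon>) / \<epsilon>\<rceil>"

lemma cluster_multiplicity_bounds:
  assumes "0 < \<epsilon>" "\<epsilon> < 1"
  shows "4 * ln (4 / \<epsilon>) / \<epsilon> \<le> cluster_multiplicity \<epsilon>"
    and "cluster_multiplicity \<epsilon> \<le> 4 * ln (4 / \<epsilon>) / \<epsilon> + 1"
    and "1 \<le> cluster_multiplicity \<epsilon>"
proof -
  have "0 < ln (4 / \<epsilon>)" using assms by (intro ln_gt_zero) (simp add: field_simps)
  then have "0 < 4 * ln (4 / \<epsilon>) / \<epsilon>" using assms(1) by simp
  then show "4 * ln (4 / \<epsilon>) / \<epsilon> \<le> cluster_multiplicity \<epsilon>"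
    and "cluster_multiplicity \<epsilon> \<le> 4 * ln (4 / \<epsilon>) / \<epsilon> + 1"
    and "1 \<le> cluster_multiplicity \<epsilon>"
    unfolding cluster_multiplicity_def by linarith+
qed

lemma cluster_multiplicity_bigtheta:
  "(\<lambda>\<epsilon>. real (cluster_multiplicity \<epsilon>)) \<in> \<Theta>[at_right 0](\<lambda>\<epsilon>. ln (1 / \<epsilon>) / \<epsilon>)"
proof -
  define a where "a = (\<lambda>\<epsilon>::real. 4 * ln (4 / \<epsilon>) / \<epsilon>)"
  have a: "a \<in> \<Theta>[at_right 0](\<lambda>\<epsilon>. ln (1 / \<epsilon>) / \<epsilon>)"
    and a1: "(\<lambda>\<epsilon>. a \<epsilon> + 1) \<in> O[at_right 0](\<lambda>\<epsilon>. ln (1 / \<epsilon>) / \<epsilon>)"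
    unfolding a_def by real_asymp+
  have "eventually (\<lambda>\<epsilon>. 0 < \<epsilon> \<and> \<epsilon> < 1) (at_right (0::real))"
    by (intro eventually_at_rightI[of 0 1]) auto
  then have bounds: "eventually (\<lambda>\<epsilon>. 0 \<le> a \<epsilon> \<and> a \<epsilon> \<le> cluster_multiplicity \<epsilon>
      \<and> cluster_multiplicity \<epsilon> \<le> a \<epsilon> + 1) (at_right 0)"
    by eventually_elim (use cluster_multiplicity_bounds in \<open>force simp: a_def\<close>)
  have upper: "(\<lambda>\<epsilon>. real (cluster_multiplicity \<epsilon>)) \<in> O[at_right 0](\<lambda>\<epsilon>. a \<epsilon> + 1)"
    using bounds by (intro landau_o.big_mono) (auto elim!: eventually_mono)
  have lower: "a \<in> O[at_right 0](\<lambda>\<epsilon>. real (cluster_multiplicity \<epsilon>))"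
    using bounds by (intro landau_o.big_mono) (auto elim!: eventually_mono)
  show ?thesis
  proof (rule bigthetaI)
    show "(\<lambda>\<epsilon>. real (cluster_multiplicity \<epsilon>)) \<in> O[at_right 0](\<lambda>\<epsilon>. ln (1 / \<epsilon>) / \<epsilon>)"
      using upper a1 by (rule landau_o.big_trans)
    have "(\<lambda>\<epsilon>. ln (1 / \<epsilon>) / \<epsilon>) \<in> O[at_right 0](a)"
      using a by (simp add: bigtheta_sym bigthetaD1)
    then have "(\<lambda>\<epsilon>. ln (1 / \<epsilon>) / \<epsilon>) \<in> O[at_right 0](\<lambda>\<epsilon>. real (cluster_multiplicity \<epsilon>))"
      using lower by (rule landau_o.big_trans)
    then show "(\<lambda>\<epsilon>. real (cluster_multiplicity \<epsilon>)) \<in> \<Omega>[at_right 0](\<lambda>\<epsilon>. ln (1 / \<epsilon>) / \<epsilon>)"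
      by (simp add: bigomega_iff_bigo)
  qed
qed

lemma le_three_plus_eps_mult:
  fixes x y \<epsilon> :: real
  assumes "0 < \<epsilon>" "\<epsilon> < 1" "0 \<le> x" "(1 - \<epsilon> / 4) * x \<le> 3 * y"
  shows "x \<le> (3 + \<epsilon>) * y"
proof -
  have "3 * x \<le> (3 + \<epsilon>) * (1 - \<epsilon> / 4) * x"
    using assms(1-3) by (intro mult_right_mono) (auto simp: algebra_simps mult_left_le)
  also have "\<dots> \<le> (3 + \<epsilon>) * (3 * y)" using assms by (simp add: mult.assoc)
  finally show ?thesis by simp
qed

theorem theorem3p6:
  "\<exists>cf :: real \<Rightarrow> nat.
     (\<lambda>\<epsilon>. real (cf \<epsilon>)) \<in> \<Theta>[at_right 0](\<lambda>\<epsilon>. ln (1 / \<epsilon>) / \<epsilon>) \<and>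
     (\<forall>\<epsilon>::real. 0 < \<epsilon> \<and> \<epsilon> < 1 \<longrightarrow> cf \<epsilon> \<ge> 1 \<and>
        (\<forall>(V :: 'a set) E w \<pi> (k :: nat).
           simple_graph V E \<and> (\<forall>e\<in>E. w e \<ge> 0) \<and> weight_ordering E w \<pi> \<and> k \<ge> cf \<epsilon> \<longrightarrow>
           (3 + \<epsilon>) * measure_pmf.expectation (random_clustering E k (cf \<epsilon>))
               (\<lambda>A. mweight w (alg_output E w \<pi> k A)) \<ge> opt E w))"
proof (intro exI[of _ cluster_multiplicity] conjI allI impI cluster_multiplicity_bigtheta)
  fix \<epsilon> :: real assume \<epsilon>: "0 < \<epsilon> \<and> \<epsilon> < 1"
  then show "1 \<le> cluster_multiplicity \<epsilon>" using cluster_multiplicity_bounds(3)[of \<epsilon>] by simp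
  fix V :: "'a set" and E w \<pi> and k :: nat
  assume G: "simple_graph V E \<and> (\<forall>e\<in>E. 0 \<le> w e) \<and> weight_ordering E w \<pi> \<and> cluster_multiplicity \<epsilon> \<le> k"
  let ?c = "cluster_multiplicity \<epsilon>"
  have E: "finite E" "\<forall>e\<in>E. 0 \<le> w e \<and> card e = 2"
    using G simple_graph_finite_edges by (auto simp: simple_graph_def)
  have "ln (1 / (\<epsilon> / 4)) \<le> ?c * (\<epsilon> / 4)"
    using cluster_multiplicity_bounds(1)[of \<epsilon>] \<epsilon> by (simp add: field_simps)
  then have "(1 - \<epsilon> / 4) * opt E w
      \<le> 3 * measure_pmf.expectation (random_clustering E k ?c) (\<lambda>A. mweight w (alg_output E w \<pi> k A))"
    using G \<epsilon> cluster_multiplicity_bounds(3)[of \<epsilon>]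
    by (intro opt_le_three_expectation[OF E]) auto
  then show "opt E w \<le> (3 + \<epsilon>) * measure_pmf.expectation (random_clustering E k ?c)
      (\<lambda>A. mweight w (alg_output E w \<pi> k A))"
    using \<epsilon> opt_nonneg[of E w] E by (intro le_three_plus_eps_mult) auto
qed

end
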